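(* Assume all thermal noise is zero ($\mathbf N_T=\mathbf 0$, $\mathbf N_D=\mathbf 0$), and let $\hat{\mathbf H}=\mathbf Y_T\mathbf S_T^\dagger$ be the least-squares channel estimate. If the jammer is not eclipsed (in the sense of eclipsing with channel estimation defined in the context), then the optimization problem $$\min_{\tilde{\mathbf S}_D\in\mathcal S^{U\times D},\ \tilde{\mathbf P}\in\mathscr G_{B-I}(\mathbb C^B)}\ \big\|\tilde{\mathbf P}(\mathbf Y_D-\hat{\mathbf H}\tilde{\mathbf S}_D)\big\|_F^2$$ has the unique minimizer $(\hat{\mathbf P},\hat{\mathbf S}_D)=(\mathbf I_B-\mathbf J\mathbf J^\dagger,\ \mathbf S_D)$.
   Context: Let $B,U,I,T,D$ be positive integers with $B\ge U+I$ and $T\ge U$. Let $\mathcal S=\{(\pm1\pm i)/\sqrt2\}\subset\mathbb C$ (QPSK). Let $\mathbf H\in\mathbb C^{B\times U}$, $\mathbf J\in\mathbb C^{B\times I}$ with $[\mathbf H,\mathbf J]$ of full column rank $U+I$. Let $\mathbf S_T\in\mathbb C^{U\times T}$ be a pilot matrix of full row rank $U$ (so $\mathbf S_T\mathbf S_T^\dagger=\mathbf I_U$), $\mathbf S_D\in\mathcal S^{U\times D}$, $\mathbf W_T\in\mathbb C^{I\times T}$, $\mathbf W_D\in\mathbb C^{I\times D}$, noise $\mathbf N_T,\mathbf N_D$, and $\mathbf Y_T=\mathbf H\mathbf S_T+\mathbf J\mathbf W_T+\mathbf N_T$, $\mathbf Y_D=\mathbf H\mathbf S_D+\mathbf J\mathbf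 W_D+\mathbf N_D$. $\mathbf A^\dagger$ is the Moore–Penrose pseudoinverse. $\mathscr G_{B-I}(\mathbb C^B)$ denotes the set of $B\times B$ orthogonal projections onto $(B-I)$-dimensional subspaces of $\mathbb C^B$. Eclipsing with channel estimation: the jammer is eclipsed if there exists $\tilde{\mathbf S}_D\in\mathcal S^{U\times D}\setminus\{\mathbf S_D\}$ such that $\begin{bmatrix}\mathbf S_D-\tilde{\mathbf S}_D\\ \mathbf W_D-\mathbf W_T\mathbf S_T^\dagger\tilde{\mathbf S}_D\end{bmatrix}\in\mathbb C^{(U+I)\times D}$ has rank at most $I$. *)

theory Defs
  imports Complex_Main "Jordan_Normal_Form.DL_Rank" "Jordan_Normal_Form.Schur_Decomposition"
begin

definition qpsk :: "complex set" where
  "qpsk = {(complex_of_real a + \<i> * complex_of_real b) / complex_of_real (sqrt 2) | a b.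
            a \<in> {-1, 1} \<and> b \<in> {-1, 1}}"

definition qpsk_mats :: "nat \<Rightarrow> nat \<Rightarrow> complex mat set" where
  "qpsk_mats m n = {M \<in> carrier_mat m n. \<forall>i<m. \<forall>j<n. M $$ (i, j) \<in> qpsk}"

definition mrank :: "complex mat \<Rightarrow> nat" where
  "mrank A = vec_space.rank (dim_row A) A"

definition pinv :: "complex mat \<Rightarrow> complex mat" where
  "pinv A = (THE X. X \<in> carrier_mat (dim_col A) (dim_row A) \<and>
      A * X * A = A \<and> X * A * X = X \<and>
      mat_adjoint (A * X) = A * X \<and> mat_adjoint (X * A) = X * A)"

definition frob_sq :: "complex mat \<Rightarrow> real" where
  "frob_sq A = (\<Sum>i<dim_row A. \<Sum>j<dim_col A. (cmod (A $$ (i, j)))\<^sup>2)"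

definition hstack :: "complex mat \<Rightarrow> complex mat \<Rightarrow> complex mat" where
  "hstack A C = mat (dim_row A) (dim_col A + dim_col C)
     (\<lambda>(i, j). if j < dim_col A then A $$ (i, j) else C $$ (i, j - dim_col A))"

definition vstack :: "complex mat \<Rightarrow> complex mat \<Rightarrow> complex mat" where
  "vstack A C = mat (dim_row A + dim_row C) (dim_col A)
     (\<lambda>(i, j). if i < dim_row A then A $$ (i, j) else C $$ (i - dim_row A, j))"

text \<open>Grassmannian G_k(C^n) realised as the set of n x n orthogonal projections
  (Hermitian idempotents) of rank k, i.e. onto k-dimensional subspaces.\<close>
definition proj_grass :: "nat \<Rightarrow> nat \<Rightarrow> complex mat set" where
  "proj_grass k n = {P \<in> carrier_mat n n. P * P = P \<and> mat_adjoint P = P \<and> mrank P = k}"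

definition eclipsed_ce ::
  "nat \<Rightarrow> nat \<Rightarrow> nat \<Rightarrow> complex mat \<Rightarrow> complex mat \<Rightarrow> complex mat \<Rightarrow> complex mat \<Rightarrow> bool" where
  "eclipsed_ce U I D S_T S_D W_T W_D =
     (\<exists>S'. S' \<in> qpsk_mats U D \<and> S' \<noteq> S_D \<and>
        mrank (vstack (S_D - S') (W_D - W_T * pinv S_T * S')) \<le> I)"

end

theory Submission
  imports Defs
begin

(*
  Without noise the least-squares estimate is H + J W with W = W_T pinv(S_T), so for candidate
  symbols S' the residual is [H, J] [S_D - S'; W_D - W S'].  At S' = S_D it equals J (W_D - W S_D),
  which is annihilated by I - J pinv(J), so the proposed pair attains the value 0.
  Conversely, a projection of rank B - I kills at most I independent vectors.  As [H, J] has trivial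
  kernel, a zero value at S' ~= S_D would make it kill the image of a matrix of rank greater than I,
  which non-eclipsing provides.  At S' = S_D, flipping one symbol shows that W_D - W S_D has rank I,
  so a zero value forces P' J = 0, and I - J pinv(J) is the only projection of rank B - I with this
  property.
*)

declare col_mult [simp del]

section \<open>Conjugate transpose\<close>

lemma mat_adjoint_dim [simp]:
  "dim_row (mat_adjoint (A :: complex mat)) = dim_col A"
  "dim_col (mat_adjoint A) = dim_row A"
  unfolding mat_adjoint_def by auto

lemma index_mat_adjoint [simp]:
  "i < dim_col A \<Longrightarrow> j < dim_row A \<Longrightarrow> mat_adjoint (A :: complex mat) $$ (i, j) = cnj (A $$ (j, i))"
  unfolding mat_adjoint_def by (simp add: mat_of_rows_def)

lemma mat_adjoint_carrier [simp]:
  "A \<in> carrier_mat n m \<Longrightarrow> mat_adjoint (A :: complex mat) \<in> carrier_mat m n"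
  unfolding carrier_mat_def by simp

lemma mat_adjoint_adjoint [simp]: "mat_adjoint (mat_adjoint (A :: complex mat)) = A"
  by (rule eq_matI) simp_all

lemma mat_adjoint_one [simp]: "mat_adjoint (1\<^sub>m n :: complex mat) = 1\<^sub>m n"
  by (rule eq_matI) simp_all

lemma mat_adjoint_zero [simp]: "mat_adjoint (0\<^sub>m n m :: complex mat) = 0\<^sub>m m n"
  by (rule eq_matI) simp_all

lemma mat_adjoint_mult:
  assumes "(A :: complex mat) \<in> carrier_mat n m" "B \<in> carrier_mat m k"
  shows "mat_adjoint (A * B) = mat_adjoint B * mat_adjoint A"
proof (rule eq_matI)
  fix i j assume "i < dim_row (mat_adjoint B * mat_adjoint A)" "j < dim_col (mat_adjoint B * mat_adjoint A)"
  then show "mat_adjoint (A * B) $$ (i, j) = (mat_adjoint B * mat_adjoint A) $$ (i, j)"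
    using assms by (simp add: scalar_prod_def mult.commute)
qed (use assms in simp_all)

lemma mat_adjoint_minus:
  assumes "(A :: complex mat) \<in> carrier_mat n m" "B \<in> carrier_mat n m"
  shows "mat_adjoint (A - B) = mat_adjoint A - mat_adjoint B"
  by (rule eq_matI) (use assms in simp_all)

lemma mat_adjoint_mult_self_eq_0:
  fixes M :: "complex mat"
  assumes M: "M \<in> carrier_mat a b" and h: "mat_adjoint M * M = 0\<^sub>m b b"
  shows "M = 0\<^sub>m a b"
proof (rule eq_matI)
  fix i j assume "i < dim_row (0\<^sub>m a b :: complex mat)" "j < dim_col (0\<^sub>m a b :: complex mat)"
  then have i: "i < a" and j: "j < b" by auto
  have "(mat_adjoint M * M) $$ (j, j) = (\<Sum>l\<in>{0..<a}. cnj (M $$ (l, j)) * M $$ (l, j))"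
    using M j by (simp add: scalar_prod_def)
  also have "\<dots> = complex_of_real (\<Sum>l\<in>{0..<a}. (cmod (M $$ (l, j)))\<^sup>2)"
    unfolding of_real_sum by (rule sum.cong) (simp_all only: complex_norm_square mult.commute)
  finally have "complex_of_real (\<Sum>l\<in>{0..<a}. (cmod (M $$ (l, j)))\<^sup>2) = 0" using h j by simp
  then have "(\<Sum>l\<in>{0..<a}. (cmod (M $$ (l, j)))\<^sup>2) = 0" by (simp only: of_real_eq_0_iff)
  then have "M $$ (i, j) = 0" using i by (subst (asm) sum_nonneg_eq_0_iff) auto
  then show "M $$ (i, j) = 0\<^sub>m a b $$ (i, j)" using i j by simp
qed (use M in simp_all)

lemma mat_adjoint_inverse:
  fixes G G' :: "complex mat"
  assumes G: "G \<in> carrier_mat n n" and G': "G' \<in> carrier_mat n n"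
    and inv: "G' * G = 1\<^sub>m n" and herm: "mat_adjoint G = G"
  shows "mat_adjoint G' = G'"
proof -
  have "G * mat_adjoint G' = 1\<^sub>m n"
    using arg_cong[OF inv, of mat_adjoint] mat_adjoint_mult[OF G' G] herm by simp
  have "mat_adjoint G' = (G' * G) * mat_adjoint G'" using inv G' by simp
  also have "\<dots> = G' * (G * mat_adjoint G')" by (rule assoc_mult_mat[OF G' G mat_adjoint_carrier[OF G']])
  also have "\<dots> = G'" using \<open>G * mat_adjoint G' = 1\<^sub>m n\<close> G' by simp
  finally show ?thesis .
qed

section \<open>Moore--Penrose inverses\<close>

definition is_pinv :: "complex mat \<Rightarrow> complex mat \<Rightarrow> bool" where
  "is_pinv A X \<longleftrightarrow> X \<in> carrier_mat (dim_col A) (dim_row A) \<and>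
      A * X * A = A \<and> X * A * X = X \<and>
      mat_adjoint (A * X) = A * X \<and> mat_adjoint (X * A) = X * A"

lemma is_pinv_adjoint_absorb:
  assumes "is_pinv A X"
  shows "mat_adjoint A * (A * X) = mat_adjoint A" "(X * A) * mat_adjoint A = mat_adjoint A"
proof -
  define n m where "n = dim_row A" and "m = dim_col A"
  have A: "A \<in> carrier_mat n m" unfolding n_def m_def by auto
  have X: "X \<in> carrier_mat m n" and p: "A * X * A = A"
    "mat_adjoint (A * X) = A * X" "mat_adjoint (X * A) = X * A"
    using assms unfolding is_pinv_def n_def m_def by auto
  have "mat_adjoint A = mat_adjoint ((A * X) * A)" using p(1) by simp
  also have "\<dots> = mat_adjoint A * mat_adjoint (A * X)"
    by (rule mat_adjoint_mult[OF mult_carrier_mat[OF A X] A])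
  finally show "mat_adjoint A * (A * X) = mat_adjoint A" unfolding p(2) by (rule sym)
  have "mat_adjoint A = mat_adjoint (A * (X * A))" using p(1) assoc_mult_mat[OF A X A] by simp
  also have "\<dots> = mat_adjoint (X * A) * mat_adjoint A"
    by (rule mat_adjoint_mult[OF A mult_carrier_mat[OF X A]])
  finally show "(X * A) * mat_adjoint A = mat_adjoint A" unfolding p(3) by (rule sym)
qed

lemma is_pinv_unique:
  assumes "is_pinv A X" "is_pinv A Y"
  shows "X = Y"
proof -
  define n m where "n = dim_row A" and "m = dim_col A"
  have A: "A \<in> carrier_mat n m" unfolding n_def m_def by auto
  have X: "X \<in> carrier_mat m n" and Y: "Y \<in> carrier_mat m n"
    using assms unfolding is_pinv_def n_def m_def by auto
  note c = A X Y mat_adjoint_carrier[OF A] mat_adjoint_carrier[OF X] mat_adjoint_carrier[OF Y]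
  have p: "X * A * X = X" "mat_adjoint (A * X) = A * X" "Y * A * Y = Y" "mat_adjoint (Y * A) = Y * A"
    using assms unfolding is_pinv_def by auto
  have AX: "A * X = mat_adjoint X * mat_adjoint A" using p(2) mat_adjoint_mult[OF A X] by simp
  have YA: "Y * A = mat_adjoint A * mat_adjoint Y" using p(4) mat_adjoint_mult[OF Y A] by simp
  have AhAY: "mat_adjoint A = mat_adjoint A * (A * Y)"
    using is_pinv_adjoint_absorb(1)[OF assms(2)] by simp
  have XAAh: "mat_adjoint A = (X * A) * mat_adjoint A"
    using is_pinv_adjoint_absorb(2)[OF assms(1)] by simp
  have "X = X * (A * X)" using p(1) assoc_mult_mat[OF X A X] by simp
  also have "\<dots> = X * mat_adjoint X * mat_adjoint A" using AX assoc_mult_mat[OF X c(5) c(4)] by simp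
  also have "\<dots> = X * mat_adjoint X * (mat_adjoint A * (A * Y))" using AhAY by simp
  also have "\<dots> = X * (mat_adjoint X * mat_adjoint A) * (A * Y)"
    using assoc_mult_mat[OF X c(5) c(4)] assoc_mult_mat[OF mult_carrier_mat[OF X c(5)] c(4) mult_carrier_mat[OF A Y]]
    by simp
  also have "\<dots> = X * A * X * A * Y"
    using AX assoc_mult_mat[OF X A X] assoc_mult_mat[OF mult_carrier_mat[OF X A] X mult_carrier_mat[OF A Y]]
      assoc_mult_mat[OF mult_carrier_mat[OF mult_carrier_mat[OF X A] X] A Y] by simp
  also have "\<dots> = X * A * Y" using p(1) by simp
  finally have XAY: "X = X * A * Y" .
  have "Y = (Y * A) * Y" using p(3) by simp
  also have "\<dots> = (X * A) * mat_adjoint A * mat_adjoint Y * Y" using YA XAAh by simp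
  also have "\<dots> = (X * A) * (mat_adjoint A * mat_adjoint Y) * Y"
    using assoc_mult_mat[OF mult_carrier_mat[OF X A] c(4) c(6)] by simp
  also have "\<dots> = X * A * (Y * A * Y)"
    using YA assoc_mult_mat[OF mult_carrier_mat[OF X A] mult_carrier_mat[OF Y A] Y] by simp
  also have "\<dots> = X * A * Y" using p(3) by simp
  finally show ?thesis using XAY by simp
qed

lemma pinv_eqI: "is_pinv A X \<Longrightarrow> pinv A = X"
  unfolding pinv_def is_pinv_def[symmetric] using is_pinv_unique by blast

lemma is_pinv_adjoint:
  assumes "is_pinv A X"
  shows "is_pinv (mat_adjoint A) (mat_adjoint X)"
proof -
  define n m where "n = dim_row A" and "m = dim_col A"
  have A: "A \<in> carrier_mat n m" unfolding n_def m_def by auto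
  have X: "X \<in> carrier_mat m n" and p: "A * X * A = A" "X * A * X = X"
    "mat_adjoint (A * X) = A * X" "mat_adjoint (X * A) = X * A"
    using assms unfolding is_pinv_def n_def m_def by auto
  have adj3: "mat_adjoint (B * C * E) = mat_adjoint E * mat_adjoint C * mat_adjoint B"
    if "B \<in> carrier_mat a b" "C \<in> carrier_mat b d" "E \<in> carrier_mat d e" for B C E :: "complex mat" and a b d e
    using that mat_adjoint_mult[OF mult_carrier_mat[OF that(1,2)] that(3)] mat_adjoint_mult[OF that(1,2)]
      assoc_mult_mat[OF mat_adjoint_carrier[OF that(3)] mat_adjoint_carrier[OF that(2)] mat_adjoint_carrier[OF that(1)]]
    by simp
  have AXA: "mat_adjoint A * mat_adjoint X * mat_adjoint A = mat_adjoint A"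
    using adj3[OF A X A] unfolding p(1) by (rule sym)
  have XAX: "mat_adjoint X * mat_adjoint A * mat_adjoint X = mat_adjoint X"
    using adj3[OF X A X] unfolding p(2) by (rule sym)
  have AhXh: "mat_adjoint A * mat_adjoint X = X * A" using mat_adjoint_mult[OF X A] p(4) by simp
  have XhAh: "mat_adjoint X * mat_adjoint A = A * X" using mat_adjoint_mult[OF A X] p(3) by simp
  show ?thesis unfolding is_pinv_def
    using AXA XAX X p(3,4) by (simp add: AhXh XhAh n_def m_def)
qed


section \<open>Matrices with trivial kernel\<close>

definition inj_mat :: "complex mat \<Rightarrow> bool" where
  "inj_mat A \<longleftrightarrow>
     (\<forall>v \<in> carrier_vec (dim_col A). A *\<^sub>v v = 0\<^sub>v (dim_row A) \<longrightarrow> v = 0\<^sub>v (dim_col A))"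

lemma inj_matD:
  "inj_mat A \<Longrightarrow> v \<in> carrier_vec (dim_col A) \<Longrightarrow> A *\<^sub>v v = 0\<^sub>v (dim_row A) \<Longrightarrow> v = 0\<^sub>v (dim_col A)"
  unfolding inj_mat_def by blast

lemma mult_mat_vec_unit_vec:
  assumes "i < dim_col (A :: complex mat)"
  shows "A *\<^sub>v unit_vec (dim_col A) i = col A i"
  by (rule eq_vecI) (use assms scalar_prod_right_unit in auto)

lemma inj_mat_distinct_cols:
  assumes "inj_mat A"
  shows "distinct (cols A)"
proof (rule ccontr)
  assume "\<not> distinct (cols A)"
  then obtain i j where ij: "i < dim_col A" "j < dim_col A" "i \<noteq> j" "col A i = col A j"
    by (auto simp: distinct_conv_nth)
  define v :: "complex vec" where "v = unit_vec (dim_col A) i - unit_vec (dim_col A) j"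
  have v: "v \<in> carrier_vec (dim_col A)" unfolding v_def by simp
  have "v $ i = 1" unfolding v_def using ij by simp
  then have "v \<noteq> 0\<^sub>v (dim_col A)" using ij by auto
  moreover have "A *\<^sub>v v = 0\<^sub>v (dim_row A)"
    unfolding v_def mult_minus_distrib_mat_vec[OF carrier_matI[OF refl refl] unit_vec_carrier unit_vec_carrier]
    using mult_mat_vec_unit_vec ij by simp
  ultimately show False using inj_matD[OF assms v] by blast
qed

lemma inj_mat_lin_indpt:
  assumes "inj_mat A"
  shows "module.lin_indpt class_ring (module_vec TYPE(complex) (dim_row A)) (set (cols A))"
proof -
  interpret vec_space "TYPE(complex)" "dim_row A" .
  show ?thesis
  proof
    assume "lin_dep (set (cols A))"
    then obtain v where "v \<in> carrier_vec (dim_col A)" "v \<noteq> 0\<^sub>v (dim_col A)" "A *\<^sub>v v = 0\<^sub>v (dim_row A)"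
      using lin_depE[OF carrier_matI[OF refl refl] _ inj_mat_distinct_cols[OF assms]] by blast
    then show False using inj_matD[OF assms] by blast
  qed
qed

lemma mrank_inj_mat: "inj_mat A \<Longrightarrow> mrank A = dim_col A"
proof -
  assume inj: "inj_mat A"
  interpret vec_space "TYPE(complex)" "dim_row A" .
  show ?thesis unfolding mrank_def
    using lin_indpt_full_rank[OF carrier_matI[OF refl refl] inj_mat_distinct_cols[OF inj]
        inj_mat_lin_indpt[OF inj]] .
qed

lemma inj_mat_dim_col_le: "inj_mat A \<Longrightarrow> dim_col A \<le> dim_row A"
proof -
  assume inj: "inj_mat A"
  interpret vec_space "TYPE(complex)" "dim_row A" .
  have "set (cols A) \<subseteq> carrier_vec (dim_row A)" using cols_dim by blast
  then have "card (set (cols A)) \<le> dim" using li_le_dim(2)[OF fin_dim _ inj_mat_lin_indpt[OF inj]] by simp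
  then show ?thesis using distinct_card[OF inj_mat_distinct_cols[OF inj]] dim_is_n by simp
qed

lemma inj_mat_mult_eq_0:
  assumes A: "A \<in> carrier_mat n m" and inj: "inj_mat A"
    and Z: "Z \<in> carrier_mat m k" and AZ: "A * Z = 0\<^sub>m n k"
  shows "Z = 0\<^sub>m m k"
proof (rule eq_matI)
  fix i j assume ij: "i < dim_row (0\<^sub>m m k :: complex mat)" "j < dim_col (0\<^sub>m m k :: complex mat)"
  have "A *\<^sub>v col Z j = col (A * Z) j" using A Z ij by simp
  also have "\<dots> = 0\<^sub>v (dim_row A)" using AZ ij A by simp
  finally have "col Z j = 0\<^sub>v (dim_col A)" by (rule inj_matD[OF inj, rotated]) (use Z A col_dim[of Z j] in simp)
  then have "col Z j $ i = 0" using ij A by simp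
  then show "Z $$ (i, j) = 0\<^sub>m m k $$ (i, j)" using ij Z by simp
qed (use Z in simp_all)

lemma inj_matI:
  assumes A: "A \<in> carrier_mat n m"
    and h: "\<And>Z. Z \<in> carrier_mat m 1 \<Longrightarrow> A * Z = 0\<^sub>m n 1 \<Longrightarrow> Z = 0\<^sub>m m 1"
  shows "inj_mat A"
  unfolding inj_mat_def
proof (intro ballI impI)
  fix v :: "complex vec" assume v: "v \<in> carrier_vec (dim_col A)" and Av: "A *\<^sub>v v = 0\<^sub>v (dim_row A)"
  define Z where "Z = mat_of_cols m [v]"
  have Z: "Z \<in> carrier_mat m 1" unfolding Z_def using mat_of_cols_carrier(1)[of m "[v]"] by simp
  have colZ: "col Z 0 = v" unfolding Z_def using v A by simp
  have "A * Z = 0\<^sub>m n 1"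
  proof (rule eq_matI)
    fix i j assume "i < dim_row (0\<^sub>m n 1 :: complex mat)" "j < dim_col (0\<^sub>m n 1 :: complex mat)"
    then have "j = 0" and i: "i < n" by auto
    then have "(A * Z) $$ (i, j) = (A *\<^sub>v v) $ i" using A Z colZ by simp
    then show "(A * Z) $$ (i, j) = 0\<^sub>m n 1 $$ (i, j)" using Av i \<open>j = 0\<close> A by simp
  qed (use A Z in simp_all)
  then have "col Z 0 = 0\<^sub>v m" using h[OF Z] by simp
  then show "v = 0\<^sub>v (dim_col A)" using colZ A by simp
qed

lemma inj_mat_one: "inj_mat (1\<^sub>m n)"
  by (rule inj_matI[OF one_carrier_mat]) simp

lemma inj_mat_mult:
  assumes A: "A \<in> carrier_mat n m" and C: "C \<in> carrier_mat m k"
    and "inj_mat A" "inj_mat C"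
  shows "inj_mat (A * C)"
proof (rule inj_matI[OF mult_carrier_mat[OF A C]])
  fix Z assume Z: "Z \<in> carrier_mat k 1" and "A * C * Z = 0\<^sub>m n 1"
  then have "A * (C * Z) = 0\<^sub>m n 1" using assoc_mult_mat[OF A C Z] by simp
  then have "C * Z = 0\<^sub>m m 1" by (rule inj_mat_mult_eq_0[OF A assms(3) mult_carrier_mat[OF C Z]])
  then show "Z = 0\<^sub>m k 1" using inj_mat_mult_eq_0[OF C assms(4) Z] by blast
qed

lemma inj_mat_invertible:
  assumes A: "A \<in> carrier_mat n n" and inj: "inj_mat A"
  obtains B where "B \<in> carrier_mat n n" "B * A = 1\<^sub>m n" "A * B = 1\<^sub>m n"
proof -
  have "det A \<noteq> 0"
  proof
    assume "det A = 0"
    then obtain v where "v \<in> carrier_vec n" "v \<noteq> 0\<^sub>v n" "A *\<^sub>v v = 0\<^sub>v n"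
      using det_0_iff_vec_prod_zero_field[OF A] by blast
    then show False using inj_matD[OF inj] A by auto
  qed
  from det_non_zero_imp_unit[OF A this, of "()"] that show ?thesis
    unfolding Units_def ring_mat_def by auto
qed


section \<open>Rank\<close>

lemma mrank_mult_le:
  assumes A: "A \<in> carrier_mat n m" and C: "C \<in> carrier_mat m k"
  shows "mrank (A * C) \<le> mrank A"
proof -
  interpret vec_space "TYPE(complex)" n .
  have cA: "set (cols A) \<subseteq> carrier_vec n" using cols_dim[of A] A by simp
  have cAC: "set (cols (A * C)) \<subseteq> carrier_vec n" using cols_dim[of "A * C"] A C by simp
  have sA: "VectorSpace.subspace class_ring (span (set (cols A))) V"
    by (rule span_is_subspace[OF cA])
  have sAC: "VectorSpace.subspace class_ring (span (set (cols (A * C)))) V"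
    by (rule span_is_subspace[OF cAC])
  have "set (cols (A * C)) \<subseteq> span (set (cols A))"
  proof
    fix x assume "x \<in> set (cols (A * C))"
    then obtain j where "j < k" "x = A *\<^sub>v col C j" using A C by (auto simp: in_set_conv_nth)
    then have "x \<in> col_space A" unfolding col_space_eq[OF A] using A C by auto
    then show "x \<in> span (set (cols A))" unfolding col_space_def .
  qed
  then have "span (set (cols (A * C))) \<subseteq> span (set (cols A))"
    using sA by (simp add: span_is_subset subspace_def)
  then have ss: "VectorSpace.subspace class_ring (span (set (cols (A * C)))) (vs (span (set (cols A))))"
    using nested_subspaces[OF sA sAC] by blast
  have "vectorspace.dim class_ring ((vs (span (set (cols A))))\<lparr>carrier := span (set (cols (A * C)))\<rparr>)
      \<le> vectorspace.dim class_ring (vs (span (set (cols A))))"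
    by (rule vectorspace.subspace_dim[OF subspace_is_vs[OF sA] ss])
      (use fin_dim_span_cols[OF A] fin_dim_span_cols[OF mult_carrier_mat[OF A C]] in simp_all)
  then show ?thesis using A C unfolding mrank_def by (simp add: rank_def)
qed

lemma mrank_add_le:
  assumes "A \<in> carrier_mat n m" "C \<in> carrier_mat n m"
  shows "mrank (A + C) \<le> mrank A + mrank C"
proof -
  interpret vec_space "TYPE(complex)" n .
  show ?thesis using rank_subadditive[OF assms] assms unfolding mrank_def by simp
qed

lemma mrank_ge_lin_indpt_cols:
  assumes "k \<le> mrank A"
  obtains ts where "length ts = k" "distinct ts" "set ts \<subseteq> set (cols A)"
    "module.lin_indpt class_ring (module_vec TYPE(complex) (dim_row A)) (set ts)"
proof -
  interpret vec_space "TYPE(complex)" "dim_row A" .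
  have A: "A \<in> carrier_mat (dim_row A) (dim_col A)" by simp
  obtain S where S: "maximal S (\<lambda>T. T \<subseteq> set (cols A) \<and> lin_indpt T)"
    using maximal_exists[of "\<lambda>T. T \<subseteq> set (cols A) \<and> lin_indpt T" "card (set (cols A))" "{}"]
    by (meson List.finite_set card_mono empty_iff empty_subsetI finite_lin_indpt2 rev_finite_subset)
  have Ssub: "S \<subseteq> set (cols A)" and Sli: "lin_indpt S" using S unfolding maximal_def by auto
  have "k \<le> card S" using assms rank_card_indpt[OF A S] unfolding mrank_def by simp
  then obtain T where T: "T \<subseteq> S" "card T = k" by (meson obtain_subset_with_card_n)
  have "finite T" using T(1) Ssub finite_subset by (metis List.finite_set)
  then obtain ts where ts: "set ts = T" "distinct ts" using finite_distinct_list by blast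
  have "lin_indpt T" using Sli T(1) Ssub cols_dim[of A] subset_li_is_li by blast
  then show ?thesis using that[of ts] ts T Ssub distinct_card[OF ts(2)] by auto
qed

lemma mult_mat_selects_cols:
  assumes A: "(A :: complex mat) \<in> carrier_mat n m" and ts: "set ts \<subseteq> set (cols A)"
  obtains C where "C \<in> carrier_mat m (length ts)" "A * C = mat_of_cols n ts"
proof -
  have "\<exists>j < m. col A j = ts ! i" if "i < length ts" for i
  proof -
    have "ts ! i \<in> set (cols A)" using ts nth_mem[OF that] by blast
    then show ?thesis using A by (auto simp: in_set_conv_nth)
  qed
  then obtain idx where idx: "\<And>i. i < length ts \<Longrightarrow> idx i < m \<and> col A (idx i) = ts ! i"
    by metis
  define C :: "complex mat" where "C = mat m (length ts) (\<lambda>(r, i). if r = idx i then 1 else 0)"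
  have C: "C \<in> carrier_mat m (length ts)" unfolding C_def by simp
  have "A * C = mat_of_cols n ts"
  proof (rule eq_matI)
    fix r i assume "r < dim_row (mat_of_cols n ts)" "i < dim_col (mat_of_cols n ts)"
    then have r: "r < n" and i: "i < length ts" by auto
    have "col C i = unit_vec m (idx i)"
      by (rule eq_vecI) (use i idx[OF i] in \<open>auto simp: C_def\<close>)
    then have "(A * C) $$ (r, i) = (A *\<^sub>v unit_vec m (idx i)) $ r" using A C r i by simp
    also have "\<dots> = (ts ! i) $ r" using mult_mat_vec_unit_vec[of "idx i" A] idx[OF i] A by simp
    finally show "(A * C) $$ (r, i) = mat_of_cols n ts $$ (r, i)" using r i by (simp add: mat_of_cols_def)
  qed (use A C in simp_all)
  then show ?thesis using that C by blast
qed

lemma inj_mat_of_cols: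
  assumes ts: "set ts \<subseteq> carrier_vec n" "distinct ts"
    and li: "module.lin_indpt class_ring (module_vec TYPE(complex) n) (set ts)"
  shows "inj_mat (mat_of_cols n ts)"
  unfolding inj_mat_def
proof (intro ballI impI)
  interpret vec_space "TYPE(complex)" n .
  fix v assume v: "v \<in> carrier_vec (dim_col (mat_of_cols n ts))"
    and Mv: "mat_of_cols n ts *\<^sub>v v = 0\<^sub>v (dim_row (mat_of_cols n ts))"
  show "v = 0\<^sub>v (dim_col (mat_of_cols n ts))"
  proof (rule ccontr)
    assume "v \<noteq> 0\<^sub>v (dim_col (mat_of_cols n ts))"
    then have "lin_dep (set (cols (mat_of_cols n ts)))"
      by (intro lin_depI[OF mat_of_cols_carrier(1)]) (use v Mv ts in auto)
    then show False using li ts by simp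
  qed
qed

lemma mrank_ge_obtain_inj_mult:
  assumes "k \<le> mrank A"
  obtains C where "C \<in> carrier_mat (dim_col A) k" "inj_mat (A * C)"
proof -
  obtain ts where ts: "length ts = k" "distinct ts" "set ts \<subseteq> set (cols A)"
    "module.lin_indpt class_ring (module_vec TYPE(complex) (dim_row A)) (set ts)"
    using mrank_ge_lin_indpt_cols[OF assms] .
  obtain C where "C \<in> carrier_mat (dim_col A) k" "A * C = mat_of_cols (dim_row A) ts"
    using mult_mat_selects_cols[OF carrier_matI[OF refl refl] ts(3)] ts(1) by metis
  moreover have "inj_mat (mat_of_cols (dim_row A) ts)"
    using inj_mat_of_cols[OF _ ts(2,4)] ts(3) cols_dim by blast
  ultimately show ?thesis using that by simp
qed

lemma inj_mat_of_mrank: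
  assumes "mrank A = dim_col A"
  shows "inj_mat A"
proof -
  define n m where "n = dim_row A" and "m = dim_col A"
  have A: "A \<in> carrier_mat n m" unfolding n_def m_def by simp
  obtain C where C: "C \<in> carrier_mat m m" and iAC: "inj_mat (A * C)"
    using mrank_ge_obtain_inj_mult[of m A] assms m_def by auto
  have "inj_mat C"
  proof (rule inj_matI[OF C])
    fix Z assume Z: "Z \<in> carrier_mat m 1" and "C * Z = 0\<^sub>m m 1"
    then have "A * C * Z = 0\<^sub>m n 1" using A C by (simp add: assoc_mult_mat)
    then show "Z = 0\<^sub>m m 1" using inj_mat_mult_eq_0[OF mult_carrier_mat[OF A C] iAC Z] by blast
  qed
  then obtain E where E: "E \<in> carrier_mat m m" "C * E = 1\<^sub>m m" using inj_mat_invertible[OF C] by metis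
  show ?thesis
  proof (rule inj_matI[OF A])
    fix Z assume Z: "Z \<in> carrier_mat m 1" and "A * Z = 0\<^sub>m n 1"
    moreover have "A * C * (E * Z) = A * Z"
      using A C E Z by (simp add: assoc_mult_mat[OF A C mult_carrier_mat[OF E(1) Z]]
          assoc_mult_mat[symmetric, OF C E(1) Z])
    ultimately have "E * Z = 0\<^sub>m m 1"
      using inj_mat_mult_eq_0[OF mult_carrier_mat[OF A C] iAC mult_carrier_mat[OF E(1) Z]] by simp
    then show "Z = 0\<^sub>m m 1"
      using C E Z assoc_mult_mat[symmetric, OF C E(1) Z] by simp
  qed
qed

lemma mult_eq_0_of_full_row_rank:
  assumes A: "A \<in> carrier_mat n m" and r: "n \<le> mrank A"
    and Z: "Z \<in> carrier_mat p n" and ZA: "Z * A = 0\<^sub>m p m"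
  shows "Z = 0\<^sub>m p n"
proof -
  obtain C where C: "C \<in> carrier_mat m n" and iAC: "inj_mat (A * C)"
    using mrank_ge_obtain_inj_mult[of n A] r A by auto
  obtain E where E: "E \<in> carrier_mat n n" "(A * C) * E = 1\<^sub>m n"
    using inj_mat_invertible[OF mult_carrier_mat[OF A C] iAC] by metis
  have "Z = Z * ((A * C) * E)" using E(2) Z by simp
  also have "\<dots> = ((Z * A) * C) * E"
    using assoc_mult_mat[symmetric, OF Z mult_carrier_mat[OF A C] E(1)] assoc_mult_mat[symmetric, OF Z A C]
    by simp
  also have "\<dots> = 0\<^sub>m p n" using ZA C E by simp
  finally show ?thesis .
qed

lemma mrank_le_mrank_mult_inj:
  assumes K: "K \<in> carrier_mat n m" and iK: "inj_mat K" and V: "V \<in> carrier_mat m d"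
  shows "mrank V \<le> mrank (K * V)"
proof -
  obtain C where C: "C \<in> carrier_mat d (mrank V)" and iVC: "inj_mat (V * C)"
    using mrank_ge_obtain_inj_mult[of "mrank V" V] V by auto
  have "inj_mat ((K * V) * C)"
    using inj_mat_mult[OF K mult_carrier_mat[OF V C] iK iVC] assoc_mult_mat[OF K V C] by simp
  then have "mrank V = mrank ((K * V) * C)" using mrank_inj_mat C K by simp
  also have "\<dots> \<le> mrank (K * V)" by (rule mrank_mult_le[OF mult_carrier_mat[OF K V] C])
  finally show ?thesis .
qed

lemma nonzero_obtain_inj_col:
  assumes Z: "Z \<in> carrier_mat n m" and nz: "Z \<noteq> 0\<^sub>m n m"
  obtains c where "c \<in> carrier_mat m 1" "inj_mat (Z * c)"
proof -
  obtain i j where ij: "i < n" "j < m" "Z $$ (i, j) \<noteq> 0"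
    using nz Z by (metis eq_matI carrier_matD(1,2) index_zero_mat(1,2,3))
  define c :: "complex mat" where "c = mat m 1 (\<lambda>(r, _). if r = j then 1 else 0)"
  have c: "c \<in> carrier_mat m 1" unfolding c_def by simp
  define z where "z = Z * c"
  have z: "z \<in> carrier_mat n 1" unfolding z_def using Z c by simp
  have "col c 0 = unit_vec m j" by (rule eq_vecI) (use ij in \<open>auto simp: c_def\<close>)
  then have zij: "z $$ (i, 0) = Z $$ (i, j)" unfolding z_def using Z c ij by simp
  have "inj_mat z"
  proof (rule inj_matI[OF z])
    fix X assume X: "X \<in> carrier_mat 1 1" and "z * X = 0\<^sub>m n 1"
    then have "(z * X) $$ (i, 0) = 0" using ij by simp
    moreover have "(z * X) $$ (i, 0) = Z $$ (i, j) * X $$ (0, 0)"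
      using zij ij X z by (simp add: scalar_prod_def)
    ultimately show "X = 0\<^sub>m 1 1" using ij X by (auto intro!: eq_matI)
  qed
  then show ?thesis using that c unfolding z_def by blast
qed


section \<open>Block matrices\<close>

lemma hstack_carrier:
  "A \<in> carrier_mat n a \<Longrightarrow> C \<in> carrier_mat n b \<Longrightarrow> hstack A C \<in> carrier_mat n (a + b)"
  unfolding hstack_def by auto

lemma vstack_carrier:
  "X \<in> carrier_mat a k \<Longrightarrow> Y \<in> carrier_mat b k \<Longrightarrow> vstack X Y \<in> carrier_mat (a + b) k"
  unfolding vstack_def by auto

lemma hstack_mult_vstack:
  assumes A: "A \<in> carrier_mat n a" and C: "C \<in> carrier_mat n b"
    and X: "X \<in> carrier_mat a k" and Y: "Y \<in> carrier_mat b k"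
  shows "hstack A C * vstack X Y = A * X + C * Y"
proof (rule eq_matI)
  fix i j assume "i < dim_row (A * X + C * Y)" "j < dim_col (A * X + C * Y)"
  then have i: "i < n" and j: "j < k" using A C X Y by auto
  have "(hstack A C * vstack X Y) $$ (i, j) = (\<Sum>l\<in>{0..<a+b}. hstack A C $$ (i, l) * vstack X Y $$ (l, j))"
    using i j hstack_carrier[OF A C] vstack_carrier[OF X Y] by (simp add: scalar_prod_def)
  also have "\<dots> = (\<Sum>l\<in>{0..<a}. hstack A C $$ (i, l) * vstack X Y $$ (l, j))
      + (\<Sum>l\<in>{a..<a+b}. hstack A C $$ (i, l) * vstack X Y $$ (l, j))"
    by (rule sum.atLeastLessThan_concat[symmetric]) simp_all
  also have "(\<Sum>l\<in>{a..<a+b}. hstack A C $$ (i, l) * vstack X Y $$ (l, j))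
      = (\<Sum>l\<in>{0..<b}. hstack A C $$ (i, l + a) * vstack X Y $$ (l + a, j))"
    using sum.shift_bounds_nat_ivl[of _ 0 a b] by (simp add: add.commute)
  also have "(\<Sum>l\<in>{0..<a}. hstack A C $$ (i, l) * vstack X Y $$ (l, j)) = (\<Sum>l\<in>{0..<a}. A $$ (i, l) * X $$ (l, j))"
    by (rule sum.cong) (use i j A C X Y in \<open>auto simp: hstack_def vstack_def\<close>)
  also have "(\<Sum>l\<in>{0..<b}. hstack A C $$ (i, l + a) * vstack X Y $$ (l + a, j)) = (\<Sum>l\<in>{0..<b}. C $$ (i, l) * Y $$ (l, j))"
    by (rule sum.cong) (use i j A C X Y in \<open>auto simp: hstack_def vstack_def\<close>)
  also have "(\<Sum>l\<in>{0..<a}. A $$ (i, l) * X $$ (l, j)) + (\<Sum>l\<in>{0..<b}. C $$ (i, l) * Y $$ (l, j))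
      = (A * X + C * Y) $$ (i, j)"
    using i j A C X Y by (simp add: scalar_prod_def)
  finally show "(hstack A C * vstack X Y) $$ (i, j) = (A * X + C * Y) $$ (i, j)" .
qed (use A C X Y in \<open>auto simp: hstack_def vstack_def\<close>)

lemma mult_hstack:
  assumes L: "L \<in> carrier_mat p n" and A: "A \<in> carrier_mat n a" and C: "C \<in> carrier_mat n b"
  shows "L * hstack A C = hstack (L * A) (L * C)"
proof (rule eq_matI)
  fix i j assume "i < dim_row (hstack (L * A) (L * C))" "j < dim_col (hstack (L * A) (L * C))"
  then have i: "i < p" and j: "j < a + b" using L A C by (auto simp: hstack_def)
  have "col (hstack A C) j = (if j < a then col A j else col C (j - a))"
    by (rule eq_vecI) (use j A C in \<open>auto simp: hstack_def\<close>)
  then show "(L * hstack A C) $$ (i, j) = hstack (L * A) (L * C) $$ (i, j)"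
    using i j L A C hstack_carrier[OF A C] by (auto simp: hstack_def)
qed (use L A C in \<open>auto simp: hstack_def\<close>)

lemma vstack_mult:
  assumes X: "X \<in> carrier_mat a m" and Y: "Y \<in> carrier_mat b m" and C: "C \<in> carrier_mat m k"
  shows "vstack X Y * C = vstack (X * C) (Y * C)"
proof (rule eq_matI)
  fix i j assume "i < dim_row (vstack (X * C) (Y * C))" "j < dim_col (vstack (X * C) (Y * C))"
  then have i: "i < a + b" and j: "j < k" using X Y C by (auto simp: vstack_def)
  have "row (vstack X Y) i = (if i < a then row X i else row Y (i - a))"
    by (rule eq_vecI) (use i X Y in \<open>auto simp: vstack_def\<close>)
  then show "(vstack X Y * C) $$ (i, j) = vstack (X * C) (Y * C) $$ (i, j)"
    using i j X Y C vstack_carrier[OF X Y] by (auto simp: vstack_def)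
qed (use X Y C in \<open>auto simp: vstack_def\<close>)

lemma vstack_add:
  assumes "X \<in> carrier_mat a k" "Y \<in> carrier_mat b k" "X' \<in> carrier_mat a k" "Y' \<in> carrier_mat b k"
  shows "vstack X Y + vstack X' Y' = vstack (X + X') (Y + Y')"
  by (rule eq_matI) (use assms in \<open>auto simp: vstack_def\<close>)

lemma vstack_zero [simp]: "vstack (0\<^sub>m a k) (0\<^sub>m b k) = (0\<^sub>m (a + b) k :: complex mat)"
  by (rule eq_matI) (auto simp: vstack_def)

lemma hstack_zero [simp]: "hstack (0\<^sub>m n a) (0\<^sub>m n b) = (0\<^sub>m n (a + b) :: complex mat)"
  by (rule eq_matI) (auto simp: hstack_def)

lemma vstack_split:
  assumes "Z \<in> carrier_mat (a + b) k"
  shows "Z = vstack (mat a k (\<lambda>(i, j). Z $$ (i, j))) (mat b k (\<lambda>(i, j). Z $$ (a + i, j)))"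
  by (rule eq_matI) (use assms in \<open>auto simp: vstack_def\<close>)

lemma vstack_eq_0_iff:
  assumes "X \<in> carrier_mat a k" "Y \<in> carrier_mat b k"
  shows "vstack X Y = 0\<^sub>m (a + b) k \<longleftrightarrow> X = 0\<^sub>m a k \<and> Y = 0\<^sub>m b k"
proof
  assume h: "vstack X Y = 0\<^sub>m (a + b) k"
  have "X $$ (i, j) = 0" if "i < a" "j < k" for i j
    using arg_cong[OF h, of "\<lambda>M. M $$ (i, j)"] that assms by (simp add: vstack_def)
  moreover have "Y $$ (i, j) = 0" if "i < b" "j < k" for i j
    using arg_cong[OF h, of "\<lambda>M. M $$ (a + i, j)"] that assms by (simp add: vstack_def)
  ultimately show "X = 0\<^sub>m a k \<and> Y = 0\<^sub>m b k" using assms by (auto intro!: eq_matI)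
qed simp

lemma inj_mat_hstack:
  assumes A: "A \<in> carrier_mat n a" and C: "C \<in> carrier_mat n b" and L: "L \<in> carrier_mat p n"
    and iA: "inj_mat A" and iLC: "inj_mat (L * C)" and LA: "L * A = 0\<^sub>m p a"
  shows "inj_mat (hstack A C)"
proof (rule inj_matI[OF hstack_carrier[OF A C]])
  fix Z assume Z: "Z \<in> carrier_mat (a + b) 1" and h: "hstack A C * Z = 0\<^sub>m n 1"
  define Z1 where "Z1 = mat a 1 (\<lambda>(i, j). Z $$ (i, j))"
  define Z2 where "Z2 = mat b 1 (\<lambda>(i, j). Z $$ (a + i, j))"
  have Z1: "Z1 \<in> carrier_mat a 1" and Z2: "Z2 \<in> carrier_mat b 1" unfolding Z1_def Z2_def by simp_all
  have ZZ: "Z = vstack Z1 Z2" unfolding Z1_def Z2_def by (rule vstack_split[OF Z])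
  have e: "A * Z1 + C * Z2 = 0\<^sub>m n 1" using h hstack_mult_vstack[OF A C Z1 Z2] ZZ by simp
  have "L * (A * Z1 + C * Z2) = L * A * Z1 + L * C * Z2"
    using mult_add_distrib_mat[OF L mult_carrier_mat[OF A Z1] mult_carrier_mat[OF C Z2]]
      assoc_mult_mat[OF L A Z1] assoc_mult_mat[OF L C Z2] by simp
  then have "L * C * Z2 = 0\<^sub>m p 1" using e LA Z1 L C Z2 by simp
  then have Z2_0: "Z2 = 0\<^sub>m b 1" by (rule inj_mat_mult_eq_0[OF mult_carrier_mat[OF L C] iLC Z2])
  then have "A * Z1 = 0\<^sub>m n 1" using e A C Z1 by simp
  then have "Z1 = 0\<^sub>m a 1" by (rule inj_mat_mult_eq_0[OF A iA Z1])
  then show "Z = 0\<^sub>m (a + b) 1" unfolding ZZ Z2_0 by simp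
qed

lemma inj_mat_hstack_right:
  assumes A: "A \<in> carrier_mat n a" and C: "C \<in> carrier_mat n b" and inj: "inj_mat (hstack A C)"
  shows "inj_mat C"
proof (rule inj_matI[OF C])
  fix Z assume Z: "Z \<in> carrier_mat b 1" and "C * Z = 0\<^sub>m n 1"
  then have "hstack A C * vstack (0\<^sub>m a 1) Z = 0\<^sub>m n 1"
    using hstack_mult_vstack[OF A C zero_carrier_mat Z] A by simp
  then have "vstack (0\<^sub>m a 1) Z = 0\<^sub>m (a + b) 1"
    by (rule inj_mat_mult_eq_0[OF hstack_carrier[OF A C] inj vstack_carrier[OF zero_carrier_mat Z]])
  then show "Z = 0\<^sub>m b 1" using vstack_eq_0_iff[OF zero_carrier_mat Z] by simp
qed

lemma mrank_vstack_zero_le: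
  assumes X: "X \<in> carrier_mat b k"
  shows "mrank (vstack (0\<^sub>m a k) X) \<le> mrank X"
proof -
  let ?r = "mrank (vstack (0\<^sub>m a k) X)"
  obtain C where C': "C \<in> carrier_mat (dim_col (vstack (0\<^sub>m a k) X)) ?r"
    and inj: "inj_mat (vstack (0\<^sub>m a k) X * C)"
    by (rule mrank_ge_obtain_inj_mult[OF order_refl])
  have C: "C \<in> carrier_mat k ?r" using C' vstack_carrier[OF zero_carrier_mat[of a k] X] by simp
  have VC: "vstack (0\<^sub>m a k) X * C = vstack (0\<^sub>m a ?r) (X * C)"
    using vstack_mult[OF zero_carrier_mat X C] C by simp
  have "inj_mat (X * C)"
  proof (rule inj_matI[OF mult_carrier_mat[OF X C]])
    fix Z assume Z: "Z \<in> carrier_mat ?r 1" and "X * C * Z = 0\<^sub>m b 1"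
    then have "vstack (0\<^sub>m a k) X * C * Z = 0\<^sub>m (a + b) 1"
      unfolding VC using vstack_mult[OF zero_carrier_mat mult_carrier_mat[OF X C] Z] Z by simp
    then show "Z = 0\<^sub>m ?r 1"
      using inj_mat_mult_eq_0[OF mult_carrier_mat[OF vstack_carrier[OF zero_carrier_mat X] C] inj Z]
      by simp
  qed
  then have "?r = mrank (X * C)" using mrank_inj_mat X C by simp
  also have "\<dots> \<le> mrank X" by (rule mrank_mult_le[OF X C])
  finally show ?thesis .
qed


lemma inj_mat_gram:
  assumes J: "J \<in> carrier_mat n k" and iJ: "inj_mat J"
  shows "inj_mat (mat_adjoint J * J)"
proof (rule inj_matI[OF mult_carrier_mat[OF mat_adjoint_carrier[OF J] J]])
  fix Z assume Z: "Z \<in> carrier_mat k 1" and h: "mat_adjoint J * J * Z = 0\<^sub>m k 1"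
  have JZ: "J * Z \<in> carrier_mat n 1" using J Z by simp
  have "mat_adjoint (J * Z) * (J * Z) = mat_adjoint Z * (mat_adjoint J * J * Z)"
    using mat_adjoint_mult[OF J Z] J Z
    by (simp add: assoc_mult_mat[OF mat_adjoint_carrier[OF Z] mat_adjoint_carrier[OF J] JZ]
        assoc_mult_mat[OF mat_adjoint_carrier[OF J] J Z])
  also have "\<dots> = 0\<^sub>m 1 1" unfolding h using Z by simp
  finally have "J * Z = 0\<^sub>m n 1" by (rule mat_adjoint_mult_self_eq_0[OF JZ])
  then show "Z = 0\<^sub>m k 1" by (rule inj_mat_mult_eq_0[OF J iJ Z])
qed

lemma pinv_of_inj_mat:
  assumes J: "J \<in> carrier_mat n k" and iJ: "inj_mat J"
  shows "is_pinv J (pinv J)" "pinv J \<in> carrier_mat k n" "pinv J * J = 1\<^sub>m k"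
proof -
  define Jh where "Jh = mat_adjoint J"
  have Jh: "Jh \<in> carrier_mat k n" unfolding Jh_def using J by simp
  define G where "G = Jh * J"
  have G: "G \<in> carrier_mat k k" unfolding G_def using J Jh by simp
  have hG: "mat_adjoint G = G" unfolding G_def Jh_def using mat_adjoint_mult[OF Jh J] Jh_def by simp
  obtain Gi where Gi: "Gi \<in> carrier_mat k k" "Gi * G = 1\<^sub>m k"
    using inj_mat_invertible[OF G] inj_mat_gram[OF J iJ] unfolding G_def Jh_def by metis
  have hGi: "mat_adjoint Gi = Gi" by (rule mat_adjoint_inverse[OF G Gi hG])
  define X where "X = Gi * Jh"
  have X: "X \<in> carrier_mat k n" unfolding X_def using Jh Gi by simp
  have XJ: "X * J = 1\<^sub>m k"
    unfolding X_def using assoc_mult_mat[OF Gi(1) Jh J] Gi(2) G_def by simp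
  have "is_pinv J X" unfolding is_pinv_def
  proof (intro conjI)
    show "X \<in> carrier_mat (dim_col J) (dim_row J)" using X J by simp
    show "J * X * J = J" using assoc_mult_mat[OF J X J] XJ J by simp
    show "X * J * X = X" using XJ X by simp
    show "mat_adjoint (X * J) = X * J" using XJ by simp
    have "mat_adjoint (J * X) = mat_adjoint X * mat_adjoint J" by (rule mat_adjoint_mult[OF J X])
    also have "\<dots> = (J * Gi) * Jh"
      unfolding X_def Jh_def using mat_adjoint_mult[OF Gi(1) Jh] hGi Jh_def by simp
    also have "\<dots> = J * X" unfolding X_def by (rule assoc_mult_mat[OF J Gi(1) Jh])
    finally show "mat_adjoint (J * X) = J * X" .
  qed
  moreover have "pinv J = X" using \<open>is_pinv J X\<close> by (rule pinv_eqI)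
  ultimately show "is_pinv J (pinv J)" "pinv J \<in> carrier_mat k n" "pinv J * J = 1\<^sub>m k"
    using X XJ by simp_all
qed

lemma inj_mat_adjoint_of_full_row_rank:
  assumes S: "S \<in> carrier_mat m n" and r: "m \<le> mrank S"
  shows "inj_mat (mat_adjoint S)"
proof (rule inj_matI[OF mat_adjoint_carrier[OF S]])
  fix Z assume Z: "Z \<in> carrier_mat m 1" and "mat_adjoint S * Z = 0\<^sub>m n 1"
  then have "mat_adjoint Z * S = 0\<^sub>m 1 n"
    using mat_adjoint_mult[OF mat_adjoint_carrier[OF S] Z] by simp
  then have "mat_adjoint Z = 0\<^sub>m 1 m" by (rule mult_eq_0_of_full_row_rank[OF S r mat_adjoint_carrier[OF Z]])
  from arg_cong[OF this, of mat_adjoint] show "Z = 0\<^sub>m m 1" by simp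
qed

lemma pinv_of_full_row_rank:
  assumes S: "S \<in> carrier_mat m n" and r: "mrank S = m"
  shows "pinv S \<in> carrier_mat n m" "S * pinv S = 1\<^sub>m m"
proof -
  define X where "X = pinv (mat_adjoint S)"
  have Sh: "mat_adjoint S \<in> carrier_mat n m" using S by simp
  have X: "is_pinv (mat_adjoint S) X" "X \<in> carrier_mat m n" "X * mat_adjoint S = 1\<^sub>m m"
    unfolding X_def using pinv_of_inj_mat[OF Sh inj_mat_adjoint_of_full_row_rank[OF S]] r by simp_all
  have "pinv S = mat_adjoint X" using is_pinv_adjoint[OF X(1)] by (simp add: pinv_eqI)
  moreover have "S * mat_adjoint X = 1\<^sub>m m"
    using arg_cong[OF X(3), of mat_adjoint] mat_adjoint_mult[OF X(2) Sh] by simp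
  ultimately show "pinv S \<in> carrier_mat n m" "S * pinv S = 1\<^sub>m m" using X(2) by simp_all
qed

section \<open>Orthogonal projections\<close>

lemma idempotent_compl:
  fixes Q :: "complex mat"
  assumes Q: "Q \<in> carrier_mat n n" and QQ: "Q * Q = Q"
  shows "(1\<^sub>m n - Q) * (1\<^sub>m n - Q) = 1\<^sub>m n - Q"
proof -
  have "(1\<^sub>m n - Q) * (1\<^sub>m n - Q) = (1\<^sub>m n - Q) - (Q * 1\<^sub>m n - Q * Q)"
    using minus_mult_distrib_mat[OF one_carrier_mat Q minus_carrier_mat[OF Q]]
      mult_minus_distrib_mat[OF Q one_carrier_mat Q] Q by simp
  then show ?thesis using Q QQ by (intro eq_matI) auto
qed

lemma inj_mat_annihilated_by_idempotent:
  assumes P: "P \<in> carrier_mat n n" and PP: "P * P = P"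
    and A: "A \<in> carrier_mat n m" and iA: "inj_mat A" and PA: "P * A = 0\<^sub>m n m"
  shows "m + mrank P \<le> n"
proof -
  obtain C where C: "C \<in> carrier_mat n (mrank P)" and iPC: "inj_mat (P * C)"
    using mrank_ge_obtain_inj_mult[of "mrank P" P] P by auto
  have "P * (P * C) = P * C" using assoc_mult_mat[OF P P C] PP by simp
  then have "inj_mat (hstack A (P * C))"
    using inj_mat_hstack[OF A mult_carrier_mat[OF P C] P iA _ PA] iPC by simp
  then show ?thesis
    using inj_mat_dim_col_le hstack_carrier[OF A mult_carrier_mat[OF P C]] by fastforce
qed

lemma mrank_annihilated_by_idempotent:
  assumes P: "P \<in> carrier_mat n n" and PP: "P * P = P"
    and M: "M \<in> carrier_mat n m" and PM: "P * M = 0\<^sub>m n m"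
  shows "mrank M + mrank P \<le> n"
proof -
  obtain C where C: "C \<in> carrier_mat m (mrank M)" and iMC: "inj_mat (M * C)"
    using mrank_ge_obtain_inj_mult[of "mrank M" M] M by auto
  have "P * (M * C) = 0\<^sub>m n (mrank M)" using assoc_mult_mat[symmetric, OF P M C] PM C by simp
  then show ?thesis
    using inj_mat_annihilated_by_idempotent[OF P PP mult_carrier_mat[OF M C] iMC] by simp
qed

lemma proj_grass_compl_pinv:
  assumes J: "J \<in> carrier_mat n k" and iJ: "inj_mat J" and kn: "k \<le> n"
  shows "1\<^sub>m n - J * pinv J \<in> proj_grass (n - k) n"
    and "(1\<^sub>m n - J * pinv J) * J = 0\<^sub>m n k"
    and "pinv J * (1\<^sub>m n - J * pinv J) = 0\<^sub>m k n"
proof -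
  define X where "X = pinv J"
  have X: "X \<in> carrier_mat k n" and XJ: "X * J = 1\<^sub>m k" and pen: "is_pinv J X"
    using pinv_of_inj_mat[OF J iJ] unfolding X_def by auto
  define Q where "Q = J * X"
  have Q: "Q \<in> carrier_mat n n" unfolding Q_def using J X by simp
  have QJ: "Q * J = J" and hQ: "mat_adjoint Q = Q" and XJX: "X * J * X = X"
    using pen unfolding Q_def is_pinv_def by auto
  have QQ: "Q * Q = Q"
    using assoc_mult_mat[OF mult_carrier_mat[OF J X] J X] QJ unfolding Q_def by simp
  define P where "P = 1\<^sub>m n - Q"
  have P: "P \<in> carrier_mat n n" unfolding P_def by (rule minus_carrier_mat[OF Q])
  have PP: "P * P = P" unfolding P_def by (rule idempotent_compl[OF Q QQ])
  have hP: "mat_adjoint P = P" unfolding P_def using mat_adjoint_minus[OF one_carrier_mat Q] hQ by simp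
  have PJ: "P * J = 0\<^sub>m n k"
    unfolding P_def using minus_mult_distrib_mat[OF one_carrier_mat Q J] QJ J by simp
  have XP: "X * P = 0\<^sub>m k n"
    unfolding P_def Q_def using mult_minus_distrib_mat[OF X one_carrier_mat mult_carrier_mat[OF J X]]
      assoc_mult_mat[symmetric, OF X J X] XJX X by simp
  have QP: "Q * P = 0\<^sub>m n n"
    unfolding P_def using mult_minus_distrib_mat[OF Q one_carrier_mat Q] QQ Q by simp
  have "P + Q = 1\<^sub>m n" unfolding P_def by (rule eq_matI) (use Q in auto)
  then have "n = mrank (P + Q)" using mrank_inj_mat[OF inj_mat_one] by simp
  also have "\<dots> \<le> mrank P + mrank J"
    using mrank_add_le[OF P Q] mrank_mult_le[OF J X] unfolding Q_def by simp
  finally have "n \<le> mrank P + k" using mrank_inj_mat[OF iJ] J by simp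
  moreover have "k \<le> mrank Q" using mrank_mult_le[OF Q J] QJ mrank_inj_mat[OF iJ] J by simp
  ultimately have "mrank P = n - k" using mrank_annihilated_by_idempotent[OF Q QQ P QP] by linarith
  then show "1\<^sub>m n - J * pinv J \<in> proj_grass (n - k) n"
    unfolding proj_grass_def using P PP hP unfolding P_def Q_def X_def by simp
  show "(1\<^sub>m n - J * pinv J) * J = 0\<^sub>m n k" using PJ unfolding P_def Q_def X_def .
  show "pinv J * (1\<^sub>m n - J * pinv J) = 0\<^sub>m k n" using XP unfolding P_def Q_def X_def .
qed


text \<open>The kernel of P has dimension k and contains the k independent columns of J, so it is the
  range of J, on which X is injective.\<close>

lemma proj_grass_annihilated_eq_0:
  assumes P: "P \<in> proj_grass (n - k) n" and kn: "k \<le> n"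
    and J: "J \<in> carrier_mat n k" and X: "X \<in> carrier_mat k n" and XJ: "X * J = 1\<^sub>m k"
    and PJ: "P * J = 0\<^sub>m n k"
    and Z: "Z \<in> carrier_mat n m" and PZ: "P * Z = 0\<^sub>m n m" and XZ: "X * Z = 0\<^sub>m k m"
  shows "Z = 0\<^sub>m n m"
proof (rule ccontr)
  assume "Z \<noteq> 0\<^sub>m n m"
  then obtain c where c: "c \<in> carrier_mat m 1" and iZc: "inj_mat (Z * c)"
    using nonzero_obtain_inj_col[OF Z] by blast
  have Zc: "Z * c \<in> carrier_mat n 1" using Z c by simp
  have Pc: "P \<in> carrier_mat n n" and PP: "P * P = P" and rP: "mrank P = n - k"
    using P unfolding proj_grass_def by auto
  have "X * (Z * c) = 0\<^sub>m k 1" using assoc_mult_mat[symmetric, OF X Z c] XZ c by simp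
  then have "inj_mat (hstack (Z * c) J)"
    using inj_mat_hstack[OF Zc J X iZc] XJ inj_mat_one by simp
  moreover have "P * hstack (Z * c) J = 0\<^sub>m n (1 + k)"
    using mult_hstack[OF Pc Zc J] assoc_mult_mat[symmetric, OF Pc Z c] PZ PJ c by simp
  ultimately have "(1 + k) + (n - k) \<le> n"
    using inj_mat_annihilated_by_idempotent[OF Pc PP hstack_carrier[OF Zc J]] rP by simp
  then show False using kn by simp
qed

lemma proj_grass_unique:
  assumes J: "J \<in> carrier_mat n k" and iJ: "inj_mat J" and kn: "k \<le> n"
    and P': "P' \<in> proj_grass (n - k) n" and P'J: "P' * J = 0\<^sub>m n k"
  shows "P' = 1\<^sub>m n - J * pinv J"
proof -
  define X where "X = pinv J"
  have X: "X \<in> carrier_mat k n" and XJ: "X * J = 1\<^sub>m k"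
    using pinv_of_inj_mat[OF J iJ] unfolding X_def by auto
  define P where "P = 1\<^sub>m n - J * X"
  have Pg: "P \<in> proj_grass (n - k) n" and XP: "X * P = 0\<^sub>m k n"
    using proj_grass_compl_pinv[OF J iJ kn] unfolding P_def X_def by auto
  have Pc: "P \<in> carrier_mat n n" and hP: "mat_adjoint P = P" using Pg unfolding proj_grass_def by auto
  have P'c: "P' \<in> carrier_mat n n" and P'P': "P' * P' = P'" and hP': "mat_adjoint P' = P'"
    using P' unfolding proj_grass_def by auto
  have "P' - 0\<^sub>m n n = P'" by (rule eq_matI) (use P'c in auto)
  then have P'P: "P' * P = P'"
    unfolding P_def using mult_minus_distrib_mat[OF P'c one_carrier_mat mult_carrier_mat[OF J X]]
      assoc_mult_mat[symmetric, OF P'c J X] P'J X P'c by simp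
  have "P - P * P' = 0\<^sub>m n n"
  proof (rule proj_grass_annihilated_eq_0[OF P' kn J X XJ P'J])
    show "P - P * P' \<in> carrier_mat n n" by (rule minus_carrier_mat[OF mult_carrier_mat[OF Pc P'c]])
    show "P' * (P - P * P') = 0\<^sub>m n n"
      using mult_minus_distrib_mat[OF P'c Pc mult_carrier_mat[OF Pc P'c]]
        assoc_mult_mat[symmetric, OF P'c Pc P'c] P'P P'P' P'c by simp
    show "X * (P - P * P') = 0\<^sub>m k n"
      using mult_minus_distrib_mat[OF X Pc mult_carrier_mat[OF Pc P'c]]
        assoc_mult_mat[symmetric, OF X Pc P'c] XP P'c by simp
  qed
  have "P = P * P'"
  proof (rule eq_matI)
    fix i j assume "i < dim_row (P * P')" "j < dim_col (P * P')"
    then show "P $$ (i, j) = (P * P') $$ (i, j)"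
      using arg_cong[OF \<open>P - P * P' = 0\<^sub>m n n\<close>, of "\<lambda>M. M $$ (i, j)"] Pc P'c by simp
  qed (use Pc P'c in simp_all)
  moreover have "P' = P * P'" using arg_cong[OF P'P, of mat_adjoint] mat_adjoint_mult[OF P'c Pc] hP hP' by simp
  ultimately show ?thesis unfolding P_def X_def by simp
qed

lemma proj_grass_eq_of_mult_eq_0:
  assumes J: "J \<in> carrier_mat n k" and iJ: "inj_mat J" and kn: "k \<le> n"
    and P': "P' \<in> proj_grass (n - k) n" and Y: "Y \<in> carrier_mat k d" and rY: "k \<le> mrank Y"
    and P'JY: "P' * (J * Y) = 0\<^sub>m n d"
  shows "P' = 1\<^sub>m n - J * pinv J"
proof (rule proj_grass_unique[OF J iJ kn P'])
  have P'c: "P' \<in> carrier_mat n n" using P' unfolding proj_grass_def by simp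
  show "P' * J = 0\<^sub>m n k"
    by (rule mult_eq_0_of_full_row_rank[OF Y rY mult_carrier_mat[OF P'c J]])
      (use assoc_mult_mat[OF P'c J Y] P'JY in simp)
qed

lemma proj_grass_mult_neq_0:
  assumes P: "P \<in> proj_grass (n - k) n"
    and K: "K \<in> carrier_mat n m" and iK: "inj_mat K" and V: "V \<in> carrier_mat m d"
    and r: "k < mrank V"
  shows "P * (K * V) \<noteq> 0\<^sub>m n d"
proof
  have Pc: "P \<in> carrier_mat n n" and PP: "P * P = P" and rP: "mrank P = n - k"
    using P unfolding proj_grass_def by auto
  assume "P * (K * V) = 0\<^sub>m n d"
  then have "mrank (K * V) + (n - k) \<le> n"
    using mrank_annihilated_by_idempotent[OF Pc PP mult_carrier_mat[OF K V]] rP by simp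
  then show False using mrank_le_mrank_mult_inj[OF K iK V] r by linarith
qed

section \<open>The QPSK alphabet\<close>

lemma qpsk_uminus: "s \<in> qpsk \<Longrightarrow> - s \<in> qpsk"
proof -
  assume "s \<in> qpsk"
  then obtain a b where ab: "s = (complex_of_real a + \<i> * complex_of_real b) / complex_of_real (sqrt 2)"
    "a \<in> {-1, 1}" "b \<in> {-1, 1}" unfolding qpsk_def by blast
  have "- s = (complex_of_real (-a) + \<i> * complex_of_real (-b)) / complex_of_real (sqrt 2)"
    unfolding ab(1) by (simp add: field_simps)
  moreover have "-a \<in> {-1, 1}" "-b \<in> {-1, 1}" using ab(2,3) by auto
  ultimately show "- s \<in> qpsk" unfolding qpsk_def by blast
qed

lemma qpsk_nonzero: "s \<in> qpsk \<Longrightarrow> s \<noteq> 0"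
  unfolding qpsk_def by (auto simp: complex_eq_iff)

lemma qpsk_mats_flip:
  assumes S: "S \<in> qpsk_mats m n" and m: "0 < m" and n: "0 < n"
  obtains S' where "S' \<in> qpsk_mats m n" "S' \<noteq> S"
    "\<And>i j. 0 < i \<Longrightarrow> i < m \<Longrightarrow> j < n \<Longrightarrow> (S - S') $$ (i, j) = 0"
proof -
  define S' :: "complex mat" where "S' = mat m n (\<lambda>(i, j). if i = 0 \<and> j = 0 then - S $$ (0, 0) else S $$ (i, j))"
  have s: "S $$ (0, 0) \<in> qpsk" using S m n unfolding qpsk_mats_def by auto
  have "S' \<in> qpsk_mats m n" using S qpsk_uminus[OF s] unfolding qpsk_mats_def S'_def by auto
  moreover have "S' $$ (0, 0) \<noteq> S $$ (0, 0)" using qpsk_nonzero[OF s] m n unfolding S'_def by simp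
  then have "S' \<noteq> S" by auto
  moreover have "(S - S') $$ (i, j) = 0" if "0 < i" "i < m" "j < n" for i j
    using that S unfolding S'_def qpsk_mats_def by simp
  ultimately show ?thesis using that by blast
qed

lemma mrank_mult_single_row_le_1:
  assumes M: "M \<in> carrier_mat p m" and E: "E \<in> carrier_mat m d" and m: "0 < m"
    and row: "\<And>i j. 0 < i \<Longrightarrow> i < m \<Longrightarrow> j < d \<Longrightarrow> E $$ (i, j) = 0"
  shows "mrank (M * E) \<le> 1"
proof -
  interpret vec_space "TYPE(complex)" p .
  have "rank (M * E) \<le> 1"
  proof (rule rank_le_1_product_entries[OF mult_carrier_mat[OF M E], where f = "\<lambda>r. M $$ (r, 0)" and g = "\<lambda>c. E $$ (0, c)"])
    fix r c assume "r < dim_row (M * E)" "c < dim_col (M * E)"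
    then have rc: "r < p" "c < d" using M E by auto
    have "(M * E) $$ (r, c) = (\<Sum>l\<in>{0..<m}. M $$ (r, l) * E $$ (l, c))"
      using rc M E by (simp add: scalar_prod_def)
    also have "\<dots> = (\<Sum>l\<in>{0..<m}. if l = 0 then M $$ (r, 0) * E $$ (0, c) else 0)"
      by (rule sum.cong) (use rc row in auto)
    finally show "(M * E) $$ (r, c) = M $$ (r, 0) * E $$ (0, c)" using m by simp
  qed
  then show ?thesis using M E unfolding mrank_def by simp
qed

section \<open>Least-squares residuals\<close>

lemma residual_eq_block:
  fixes H J S_T S_D W_T W_D S' X :: "complex mat"
  assumes H: "H \<in> carrier_mat B U" and J: "J \<in> carrier_mat B I"
    and S_T: "S_T \<in> carrier_mat U T" and X: "X \<in> carrier_mat T U" and SX: "S_T * X = 1\<^sub>m U"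
    and S_D: "S_D \<in> carrier_mat U D" and S': "S' \<in> carrier_mat U D"
    and W_T: "W_T \<in> carrier_mat I T" and W_D: "W_D \<in> carrier_mat I D"
  shows "(H * S_D + J * W_D) - ((H * S_T + J * W_T) * X) * S'
       = hstack H J * vstack (S_D - S') (W_D - W_T * X * S')"
proof -
  define W where "W = W_T * X"
  have Wc: "W \<in> carrier_mat I U" unfolding W_def using W_T X by simp
  have "(H * S_T + J * W_T) * X = H * (S_T * X) + J * W"
    unfolding W_def using add_mult_distrib_mat[OF mult_carrier_mat[OF H S_T] mult_carrier_mat[OF J W_T] X]
      assoc_mult_mat[OF H S_T X] assoc_mult_mat[OF J W_T X] by simp
  then have "((H * S_T + J * W_T) * X) * S' = H * S' + J * (W * S')"
    using SX H add_mult_distrib_mat[OF H mult_carrier_mat[OF J Wc] S'] assoc_mult_mat[OF J Wc S'] by simp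
  moreover have "hstack H J * vstack (S_D - S') (W_D - W * S') = (H * S_D - H * S') + (J * W_D - J * (W * S'))"
    using hstack_mult_vstack[OF H J minus_carrier_mat[OF S'] minus_carrier_mat[OF mult_carrier_mat[OF Wc S']]]
      mult_minus_distrib_mat[OF H S_D S'] mult_minus_distrib_mat[OF J W_D mult_carrier_mat[OF Wc S']] by simp
  moreover have "(H * S_D + J * W_D) - (H * S' + J * (W * S')) = (H * S_D - H * S') + (J * W_D - J * (W * S'))"
    by (rule eq_matI) (use H J S_D S' Wc W_D in simp_all)
  ultimately show ?thesis unfolding W_def by simp
qed

text \<open>Replacing S_D by S' adds [E; W E] with E = S_D - S' to the stacked error at the true symbols.
  Flipping one QPSK symbol makes E nonzero in a single row, so this term has rank at most one.\<close>

lemma not_eclipsed_mrank_ge: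
  assumes U: "0 < U" and D: "0 < D" and S_D: "S_D \<in> qpsk_mats U D"
    and W: "W \<in> carrier_mat I U" and W_D: "W_D \<in> carrier_mat I D"
    and ne: "\<And>S'. S' \<in> qpsk_mats U D \<Longrightarrow> S' \<noteq> S_D \<Longrightarrow> I < mrank (vstack (S_D - S') (W_D - W * S'))"
  shows "I \<le> mrank (W_D - W * S_D)"
proof -
  have S: "S_D \<in> carrier_mat U D" using S_D unfolding qpsk_mats_def by simp
  obtain S' where S': "S' \<in> qpsk_mats U D" "S' \<noteq> S_D"
    and row: "\<And>i j. 0 < i \<Longrightarrow> i < U \<Longrightarrow> j < D \<Longrightarrow> (S_D - S') $$ (i, j) = 0"
    using qpsk_mats_flip[OF S_D U D] by blast
  have S'c: "S' \<in> carrier_mat U D" using S' unfolding qpsk_mats_def by simp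
  have E: "S_D - S' \<in> carrier_mat U D" by (rule minus_carrier_mat[OF S'c])
  have V1: "vstack (1\<^sub>m U) W \<in> carrier_mat (U + I) U" by (rule vstack_carrier[OF one_carrier_mat W])
  have XD: "W_D - W * S_D \<in> carrier_mat I D" by (rule minus_carrier_mat[OF mult_carrier_mat[OF W S]])
  have "vstack (S_D - S') (W_D - W * S')
      = vstack (1\<^sub>m U) W * (S_D - S') + vstack (0\<^sub>m U D) (W_D - W * S_D)"
  proof -
    have "W * (S_D - S') + (W_D - W * S_D) = W_D - W * S'"
      using mult_minus_distrib_mat[OF W S S'c] W S S'c W_D by (auto intro!: eq_matI)
    then show ?thesis
      using vstack_mult[OF one_carrier_mat W E] vstack_add[OF E mult_carrier_mat[OF W E] zero_carrier_mat XD] E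
        left_mult_one_mat[OF E] by simp
  qed
  then have "I < mrank (vstack (1\<^sub>m U) W * (S_D - S') + vstack (0\<^sub>m U D) (W_D - W * S_D))"
    using ne[OF S'] by simp
  also have "\<dots> \<le> 1 + mrank (W_D - W * S_D)"
    using mrank_add_le[OF mult_carrier_mat[OF V1 E] vstack_carrier[OF zero_carrier_mat XD]]
      mrank_mult_single_row_le_1[OF V1 E U row] mrank_vstack_zero_le[OF XD, of U] by linarith
  finally show ?thesis by simp
qed

lemma frob_sq_pos:
  assumes M: "M \<in> carrier_mat a b" and nz: "M \<noteq> 0\<^sub>m a b"
  shows "0 < frob_sq M"
proof -
  obtain i j where ij: "i < a" "j < b" "M $$ (i, j) \<noteq> 0"
    using nz M by (metis eq_matI carrier_matD(1,2) index_zero_mat(1,2,3))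
  have "0 < (cmod (M $$ (i, j)))\<^sup>2" using ij by simp
  also have "\<dots> \<le> (\<Sum>j<b. (cmod (M $$ (i, j)))\<^sup>2)"
    by (rule member_le_sum) (use ij in auto)
  also have "\<dots> \<le> (\<Sum>i<a. \<Sum>j<b. (cmod (M $$ (i, j)))\<^sup>2)"
    by (rule member_le_sum[where f = "\<lambda>i. \<Sum>j<b. (cmod (M $$ (i, j)))\<^sup>2"]) (use ij in \<open>auto intro: sum_nonneg\<close>)
  finally show ?thesis unfolding frob_sq_def using M by simp
qed


lemma proj_grass_block_error_neq_0:
  assumes H: "H \<in> carrier_mat B U" and J: "J \<in> carrier_mat B I"
    and iK: "inj_mat (hstack H J)" and IB: "I \<le> B"
    and U: "0 < U" and D: "0 < D" and S_D: "S_D \<in> qpsk_mats U D"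
    and W: "W \<in> carrier_mat I U" and W_D: "W_D \<in> carrier_mat I D"
    and ne: "\<And>S'. S' \<in> qpsk_mats U D \<Longrightarrow> S' \<noteq> S_D \<Longrightarrow> I < mrank (vstack (S_D - S') (W_D - W * S'))"
    and S': "S' \<in> qpsk_mats U D" and P': "P' \<in> proj_grass (B - I) B"
    and neq: "(S', P') \<noteq> (S_D, 1\<^sub>m B - J * pinv J)"
  shows "P' * (hstack H J * vstack (S_D - S') (W_D - W * S')) \<noteq> 0\<^sub>m B D"
proof (cases "S' = S_D")
  case True
  have S: "S_D \<in> carrier_mat U D" using S_D unfolding qpsk_mats_def by simp
  have XD: "W_D - W * S_D \<in> carrier_mat I D" by (rule minus_carrier_mat[OF mult_carrier_mat[OF W S]])
  have "hstack H J * vstack (S_D - S_D) (W_D - W * S_D) = J * (W_D - W * S_D)"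
    using hstack_mult_vstack[OF H J zero_carrier_mat XD] H J S XD by simp
  then show ?thesis
    using proj_grass_eq_of_mult_eq_0[OF J inj_mat_hstack_right[OF H J iK] IB P' XD
        not_eclipsed_mrank_ge[OF U D S_D W W_D ne]] True neq by auto
next
  case False
  have S'c: "S' \<in> carrier_mat U D" using S' unfolding qpsk_mats_def by simp
  show ?thesis
    using proj_grass_mult_neq_0[OF P' hstack_carrier[OF H J] iK _ ne[OF S' False]]
      vstack_carrier[OF minus_carrier_mat[OF S'c] minus_carrier_mat[OF mult_carrier_mat[OF W S'c]]] by simp
qed

theorem theorem3:
  fixes B U I T D :: nat
    and H J S_T S_D W_T W_D Y_T Y_D :: "complex mat"
  assumes pos: "0 < B" "0 < U" "0 < I" "0 < T" "0 < D"
    and dims: "U + I \<le> B" "U \<le> T"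
    and H: "H \<in> carrier_mat B U" and J: "J \<in> carrier_mat B I"
    and HJ_rank: "mrank (hstack H J) = U + I"
    and S_T: "S_T \<in> carrier_mat U T" and S_T_rank: "mrank S_T = U"
    and S_D: "S_D \<in> qpsk_mats U D"
    and W_T: "W_T \<in> carrier_mat I T" and W_D: "W_D \<in> carrier_mat I D"
    and Y_T: "Y_T = H * S_T + J * W_T"
    and Y_D: "Y_D = H * S_D + J * W_D"
    and not_ecl: "\<not> eclipsed_ce U I D S_T S_D W_T W_D"
  shows "(1\<^sub>m B - J * pinv J) \<in> proj_grass (B - I) B \<and>
         (\<forall>S' \<in> qpsk_mats U D. \<forall>P' \<in> proj_grass (B - I) B.
            (S', P') \<noteq> (S_D, 1\<^sub>m B - J * pinv J) \<longrightarrow>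
            frob_sq ((1\<^sub>m B - J * pinv J) * (Y_D - (Y_T * pinv S_T) * S_D))
              < frob_sq (P' * (Y_D - (Y_T * pinv S_T) * S')))"
proof -
  let ?P = "1\<^sub>m B - J * pinv J" and ?R = "\<lambda>S'. Y_D - (Y_T * pinv S_T) * S'"
  define W where "W = W_T * pinv S_T"
  have S_Dc: "S_D \<in> carrier_mat U D" using S_D unfolding qpsk_mats_def by simp
  have K: "hstack H J \<in> carrier_mat B (U + I)" by (rule hstack_carrier[OF H J])
  have iK: "inj_mat (hstack H J)" using inj_mat_of_mrank HJ_rank K by simp
  have IB: "I \<le> B" using dims by simp
  note X = pinv_of_full_row_rank[OF S_T S_T_rank]
  have Wc: "W \<in> carrier_mat I U" unfolding W_def using W_T X by simp
  have R: "?R S' = hstack H J * vstack (S_D - S') (W_D - W * S')" if "S' \<in> carrier_mat U D" for S'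
    unfolding Y_D Y_T W_def by (rule residual_eq_block[OF H J S_T X S_Dc that W_T W_D])
  have ne: "I < mrank (vstack (S_D - S') (W_D - W * S'))" if "S' \<in> qpsk_mats U D" "S' \<noteq> S_D" for S'
    using not_ecl that unfolding eclipsed_ce_def W_def by force
  have V: "vstack (S_D - S') (W_D - W * S') \<in> carrier_mat (U + I) D" if "S' \<in> carrier_mat U D" for S'
    using vstack_carrier[OF minus_carrier_mat[OF that] minus_carrier_mat[OF mult_carrier_mat[OF Wc that]]] .
  note P = proj_grass_compl_pinv[OF J inj_mat_hstack_right[OF H J iK] IB]
  have XD: "W_D - W * S_D \<in> carrier_mat I D" by (rule minus_carrier_mat[OF mult_carrier_mat[OF Wc S_Dc]])
  have "?R S_D = J * (W_D - W * S_D)"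
    using R[OF S_Dc] hstack_mult_vstack[OF H J zero_carrier_mat XD] H J XD S_Dc by simp
  moreover have "?P \<in> carrier_mat B B" using P(1) unfolding proj_grass_def by simp
  ultimately have "?P * ?R S_D = 0\<^sub>m B D"
    using assoc_mult_mat[symmetric, OF _ J XD] P(2) left_mult_zero_mat[OF XD] by simp
  show ?thesis
  proof (intro conjI ballI impI)
    fix S' P' assume S': "S' \<in> qpsk_mats U D" and P': "P' \<in> proj_grass (B - I) B"
      and neq: "(S', P') \<noteq> (S_D, ?P)"
    have S'c: "S' \<in> carrier_mat U D" using S' unfolding qpsk_mats_def by simp
    have "P' * ?R S' \<noteq> 0\<^sub>m B D"
      using proj_grass_block_error_neq_0[OF H J iK IB pos(2,5) S_D Wc W_D ne S' P' neq] R[OF S'c] by simp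
    then have "0 < frob_sq (P' * ?R S')"
      by (rule frob_sq_pos[rotated])
        (use P' mult_carrier_mat[OF _ mult_carrier_mat[OF K V[OF S'c]]] R[OF S'c] in \<open>auto simp: proj_grass_def\<close>)
    then show "frob_sq (?P * ?R S_D) < frob_sq (P' * ?R S')"
      using \<open>?P * ?R S_D = 0\<^sub>m B D\<close> by (simp add: frob_sq_def)
  qed (rule P(1))
qed

end
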